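(* Let $(X_n)$ be the fractionally integrated noise F($d$) with $d\in(0,1/2)$, and let $k\ge1$. Define $a_{0,k}=1$ and $(a_{1,k},\dots,a_{k,k})$ by requiring that $-\sum_{j=1}^{k}a_{j,k}X_{k+1-j}$ is the orthogonal projection in $L^2$ of $X_{k+1}$ onto $\mathrm{span}\{X_1,\dots,X_k\}$. Then for every $j\in\{1,\dots,k\}$, $$a_{j,k}<a_j<0 .$$
   Context: Fractionally integrated noise F($d$), $d\in(0,1/2)$, is the stationary solution of $X_n=(1-B)^{-d}\varepsilon_n$. Here $B$ is the backward shift and $(\varepsilon_n)_{n\in\mathbb Z}$ is a sequence of uncorrelated random variables with mean $0$ and variance $\sigma_\varepsilon^2>0$. Equivalently, $X_n=\sum_{j\ge0}b_j\varepsilon_{n-j}$ with $b_j=\frac{\Gamma(j+d)}{\Gamma(j+1)\Gamma(d)}$, and $\varepsilon_n=\sum_{j\ge0}a_jX_{n-j}$ with $a_0=1$ and $a_j=\frac{\Gamma(j-d)}{\Gamma(j+1)\Gamma(-d)}$ for $j\ge1$. *)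

theory Defs
  imports "HOL-Analysis.Analysis"
begin

text \<open>MA(infinity) coefficients b_j of fractionally integrated noise F(d).\<close>
definition fi_b :: "real \<Rightarrow> nat \<Rightarrow> real" where
  "fi_b d j = Gamma (real j + d) / (Gamma (real j + 1) * Gamma d)"

text \<open>AR(infinity) coefficients a_j of F(d): a_0 = 1, a_j = Gamma(j-d)/(Gamma(j+1) Gamma(-d)).\<close>
definition fi_a :: "real \<Rightarrow> nat \<Rightarrow> real" where
  "fi_a d j = (if j = 0 then 1 else Gamma (real j - d) / (Gamma (real j + 1) * Gamma (- d)))"

text \<open>Autocovariance of X_n = sum_j b_j eps_(n-j), eps uncorrelated, mean 0, variance s2:
  Cov(X_(n+h), X_n) = s2 * sum_j b_j b_(j+h).\<close>
definition fi_acvf :: "real \<Rightarrow> real \<Rightarrow> nat \<Rightarrow> real" where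
  "fi_acvf d s2 h = s2 * (\<Sum>j. fi_b d j * fi_b d (j + h))"

text \<open>c 1, ..., c k are the coefficients such that - sum_(j=1..k) c_j X_(k+1-j) is the orthogonal
  projection in L2 of X_(k+1) onto span{X_1,...,X_k}: the residual
  X_(k+1) + sum_j c_j X_(k+1-j) is orthogonal to each X_(k+1-i), i = 1..k, i.e.
  gamma(i) + sum_j c_j gamma(|i-j|) = 0.\<close>
definition fi_proj_coeffs :: "real \<Rightarrow> real \<Rightarrow> nat \<Rightarrow> (nat \<Rightarrow> real) \<Rightarrow> bool" where
  "fi_proj_coeffs d s2 k c \<longleftrightarrow>
     (\<forall>i\<in>{1..k}. fi_acvf d s2 i +
        (\<Sum>j=1..k. c j * fi_acvf d s2 (nat \<bar>int i - int j\<bar>)) = 0)"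

end

theory Submission
  imports Defs
begin

text \<open>
  Summing a telescoping identity for the coefficients \<open>b\<^sub>j\<close> shows that the autocovariances
  satisfy \<open>(h + 1 - d) \<gamma>(h + 1) = (h + d) \<gamma>(h)\<close>. With this recursion, Hosking's closed form
  \<open>a\<^sub>j \<Prod>\<^sub>m\<^sub><\<^sub>j (k - m) / (k - m - d)\<close> solves the normal equations: the residuals
  \<open>R(i) = \<Sum>\<^sub>j\<^sub>\<le>\<^sub>k a\<^sub>j\<^sub>,\<^sub>k \<gamma>(|i - j|)\<close> satisfy \<open>(i + 1 - d)(i - k) R(i + 1) = i (i - k + d) R(i)\<close> and so vanish
  for \<open>1 \<le> i \<le> k\<close>. The Toeplitz matrix \<open>\<gamma>(|i - j|)\<close> is the Gram matrix of the linearly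
  independent shifted sequences \<open>(b\<^sub>n\<^sub>-\<^sub>i)\<^sub>n\<close>, so the solution is unique. Since every factor
  \<open>(k - m) / (k - m - d)\<close> exceeds 1 and \<open>a\<^sub>j < 0\<close>, we get \<open>a\<^sub>j\<^sub>,\<^sub>k < a\<^sub>j\<close>.
\<close>

lemma real_not_Ints_between_0_1: "0 < x \<Longrightarrow> x < 1 \<Longrightarrow> (x::real) \<notin> \<int>"
  using Ints_nonzero_abs_less1 by fastforce

lemma fi_b_0: "0 < d \<Longrightarrow> fi_b d 0 = 1"
  by (simp add: fi_b_def less_imp_neq[OF Gamma_real_pos, symmetric])

lemma fi_b_Suc:
  fixes d :: real assumes "0 < d"
  shows "(real m + 1) * fi_b d (Suc m) = (real m + d) * fi_b d m"
proof -
  have "Gamma (real m + d + 1) = (real m + d) * Gamma (real m + d)"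
    by (rule Gamma_plus1) (use assms in \<open>auto simp: nonpos_Ints_def\<close>)
  moreover have "Gamma (real m + 1 + 1) = (real m + 1) * Gamma (real m + 1)"
    by (rule Gamma_plus1) (auto simp: nonpos_Ints_def)
  moreover have "Gamma (real m + 1) > 0" "Gamma d > 0" using assms by auto
  ultimately show ?thesis
    unfolding fi_b_def by (simp add: add_ac)
qed

lemma fi_b_pos: "0 < d \<Longrightarrow> 0 < fi_b d m"
proof (induction m)
  case (Suc m)
  then have "0 < (real m + 1) * fi_b d (Suc m)"
    using fi_b_Suc[of d m] by simp
  then show ?case by (simp add: zero_less_mult_iff)
qed (simp add: fi_b_0)

lemma decseq_fi_b:
  fixes d :: real assumes "0 < d" "d \<le> 1"
  shows "decseq (fi_b d)"
proof (rule decseq_SucI)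
  fix m
  have "(real m + 1) * fi_b d (Suc m) \<le> (real m + 1) * fi_b d m"
    using fi_b_Suc[OF assms(1), of m] fi_b_pos[OF assms(1), of m] assms(2)
    by (simp add: mult_right_mono)
  then show "fi_b d (Suc m) \<le> fi_b d m" by simp
qed

lemma fi_b_le_powr:
  fixes d :: real assumes "0 < d" "d \<le> 1"
  shows "fi_b d m \<le> (real m + 1) powr (d - 1)"
proof -
  have "fi_b d m \<le> exp (- (1 - d) * harm m)"
  proof (induction m)
    case (Suc m)
    have "fi_b d (Suc m) = fi_b d m * (1 + - (1 - d) / (real m + 1))"
      using fi_b_Suc[OF assms(1), of m] by (simp add: field_simps)
    also have "\<dots> \<le> exp (- (1 - d) * harm m) * exp (- (1 - d) / (real m + 1))"
      using Suc fi_b_pos[OF assms(1), of m] assms exp_ge_add_one_self[of "- (1 - d) / (real m + 1)"]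
      by (intro mult_mono) (auto simp: field_simps)
    also have "\<dots> = exp (- (1 - d) * harm (Suc m))"
      by (simp add: harm_Suc exp_add[symmetric] field_simps)
    finally show ?case .
  qed (use assms in \<open>simp add: fi_b_0 harm_def\<close>)
  also have "\<dots> \<le> exp (- (1 - d) * ln (real m + 1))"
    using ln_le_harm[of m] assms by (simp add: mult_left_mono_neg)
  also have "\<dots> = (real m + 1) powr (d - 1)"
    by (simp add: powr_def algebra_simps)
  finally show ?thesis .
qed

lemma fi_b_mult_le_powr:
  fixes d :: real assumes "0 < d" "d \<le> 1"
  shows "fi_b d m * fi_b d (m + h) \<le> (real m + 1) powr (2 * d - 2)"
proof -
  have "fi_b d m * fi_b d (m + h) \<le> fi_b d m * fi_b d m"
    using fi_b_pos[OF assms(1)] decseqD[OF decseq_fi_b[OF assms], of m "m + h"]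
    by (simp add: mult_left_mono)
  also have "\<dots> \<le> (real m + 1) powr (d - 1) * (real m + 1) powr (d - 1)"
    using fi_b_pos[OF assms(1), of m] fi_b_le_powr[OF assms, of m] by (intro mult_mono) auto
  also have "\<dots> = (real m + 1) powr (2 * d - 2)"
    by (simp add: powr_add[symmetric])
  finally show ?thesis .
qed

lemma summable_fi_b_mult:
  fixes d :: real assumes "0 < d" "d < 1/2"
  shows "summable (\<lambda>m. fi_b d m * fi_b d (m + h))"
proof (rule summable_comparison_test')
  have "summable (\<lambda>n. real (Suc n) powr (2 * d - 2))"
    using assms by (subst summable_Suc_iff) (simp add: summable_real_powr_iff)
  then show "summable (\<lambda>n. (real n + 1) powr (2 * d - 2))"
    by (simp add: add.commute)
  show "norm (fi_b d m * fi_b d (m + h)) \<le> (real m + 1) powr (2 * d - 2)" for m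
    using fi_b_pos[OF assms(1), of m] fi_b_pos[OF assms(1), of "m + h"] fi_b_mult_le_powr[of d m h] assms
    by (simp add: abs_mult)
qed

lemma fi_b_mult_tail_tendsto_0:
  fixes d :: real assumes "0 < d" "d < 1/2"
  shows "(\<lambda>N. real N * fi_b d N * fi_b d (N + h)) \<longlonglongrightarrow> 0"
proof (rule tendsto_sandwich[of "\<lambda>_. 0" _ _ "\<lambda>N. (real N + 1) powr (2 * d - 1)"])
  show "(\<lambda>N. (real N + 1) powr (2 * d - 1)) \<longlonglongrightarrow> 0"
  proof (rule tendsto_neg_powr)
    show "filterlim (\<lambda>N. real N + 1) at_top sequentially"
      using filterlim_tendsto_add_at_top[OF tendsto_const filterlim_real_sequentially, of 1]
      by (simp add: add.commute)
  qed (use assms in simp)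
  show "\<forall>\<^sub>F N in sequentially. 0 \<le> real N * fi_b d N * fi_b d (N + h)"
    using fi_b_pos[OF assms(1)] by (simp add: less_imp_le)
  have "real N * (fi_b d N * fi_b d (N + h)) \<le> (real N + 1) * (real N + 1) powr (2 * d - 2)" for N
    using fi_b_pos[OF assms(1), of N] fi_b_pos[OF assms(1), of "N + h"] fi_b_mult_le_powr[of d N h] assms
    by (intro mult_mono) auto
  then show "\<forall>\<^sub>F N in sequentially. real N * fi_b d N * fi_b d (N + h) \<le> (real N + 1) powr (2 * d - 1)"
    by (simp add: mult.assoc powr_mult_base)
qed simp

lemma fi_b_mult_telescope:
  fixes d :: real assumes "0 < d"
  shows "(real h + 1 - d) * (fi_b d m * fi_b d (m + Suc h)) - (real h + d) * (fi_b d m * fi_b d (m + h))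
       = real m * fi_b d m * fi_b d (m + h) - real (Suc m) * fi_b d (Suc m) * fi_b d (Suc m + h)"
proof -
  define B B' where "B = fi_b d (m + h)" and "B' = fi_b d (Suc (m + h))"
  have step_m: "(real m + 1) * fi_b d (Suc m) = (real m + d) * fi_b d m"
    using fi_b_Suc[OF assms] .
  have step_mh: "(real m + real h + 1) * B' = (real m + real h + d) * B"
    using fi_b_Suc[OF assms, of "m + h"] unfolding B_def B'_def by simp
  have "(real h + 1 - d) * (fi_b d m * B') - (real h + d) * (fi_b d m * B)
      - (real m * fi_b d m * B - (real m + 1) * fi_b d (Suc m) * B')
      = fi_b d m * ((real m + real h + 1) * B' - (real m + real h + d) * B)"
    unfolding step_m by (simp add: algebra_simps)
  also have "\<dots> = 0"
    using step_mh by simp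
  finally show ?thesis
    unfolding B_def B'_def by simp
qed

lemma fi_acvf_Suc:
  fixes d :: real assumes "0 < d" "d < 1/2"
  shows "(real h + 1 - d) * fi_acvf d s2 (Suc h) = (real h + d) * fi_acvf d s2 h"
proof -
  define S where "S h = (\<Sum>m. fi_b d m * fi_b d (m + h))" for h
  define f where "f m = real m * fi_b d m * fi_b d (m + h)" for m
  have partial_sums: "(real h + 1 - d) * (\<Sum>m<N. fi_b d m * fi_b d (m + Suc h))
       - (real h + d) * (\<Sum>m<N. fi_b d m * fi_b d (m + h)) = - f N" for N
    using sum_lessThan_telescope'[of f N]
    unfolding sum_distrib_left sum_subtractf[symmetric] fi_b_mult_telescope[OF assms(1)] f_def
    by simp
  have "(\<lambda>N. - f N) \<longlonglongrightarrow> (real h + 1 - d) * S (Suc h) - (real h + d) * S h"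
    unfolding S_def partial_sums[symmetric]
    by (intro tendsto_intros summable_LIMSEQ summable_fi_b_mult assms)
  moreover have "(\<lambda>N. - f N) \<longlonglongrightarrow> 0"
    using tendsto_minus[OF fi_b_mult_tail_tendsto_0[OF assms, of h]] unfolding f_def by simp
  ultimately have "(real h + 1 - d) * S (Suc h) - (real h + d) * S h = 0"
    by (rule LIMSEQ_unique)
  then show ?thesis
    unfolding fi_acvf_def S_def[symmetric] by (simp add: algebra_simps)
qed

lemma fi_acvf_Suc_int:
  fixes d :: real assumes "0 < d" "d < 1/2"
  shows "(of_int z + 1 - d) * fi_acvf d s2 (nat \<bar>z + 1\<bar>) = (of_int z + d) * fi_acvf d s2 (nat \<bar>z\<bar>)"
proof (cases z rule: int_cases)
  case (nonneg n)
  then have z: "nat \<bar>z + 1\<bar> = Suc n" "nat \<bar>z\<bar> = n" "of_int z = real n"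
    by auto
  show ?thesis
    unfolding z by (rule fi_acvf_Suc[OF assms])
next
  case (neg n)
  then have z: "nat \<bar>z + 1\<bar> = n" "nat \<bar>z\<bar> = Suc n"
    "of_int z + 1 - d = - (real n + d)" "of_int z + d = - (real n + 1 - d)"
    by auto
  show ?thesis
    unfolding z mult_minus_left fi_acvf_Suc[OF assms, of n s2] ..
qed

lemma fi_a_0: "fi_a d 0 = 1"
  by (simp add: fi_a_def)

lemma fi_a_eq_Gamma:
  fixes d :: real assumes "d \<notin> \<int>"
  shows "fi_a d j = Gamma (real j - d) / (Gamma (real j + 1) * Gamma (- d))"
proof -
  have "- d \<notin> \<int>\<^sub>\<le>\<^sub>0"
    using assms Ints_minus[of "- d"] by auto
  then show ?thesis by (simp add: fi_a_def Gamma_nonzero)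
qed

lemma fi_a_Suc:
  fixes d :: real assumes "d \<notin> \<int>"
  shows "(real j + 1) * fi_a d (Suc j) = (real j - d) * fi_a d j"
proof -
  have not_pole: "real j - d \<notin> \<int>\<^sub>\<le>\<^sub>0"
    using assms Ints_diff[of "real j" "real j - d"] by auto
  have "Gamma (real j + 1 - d) = (real j - d) * Gamma (real j - d)"
    using Gamma_plus1[OF not_pole] by (simp add: diff_add_eq)
  moreover have "Gamma (real j + 1 + 1) = (real j + 1) * Gamma (real j + 1)"
    by (rule Gamma_plus1) (auto simp: nonpos_Ints_def)
  moreover have "fi_a d (Suc j) = Gamma (real j + 1 - d) / (Gamma (real j + 1 + 1) * Gamma (- d))"
    using fi_a_eq_Gamma[OF assms, of "Suc j"] unfolding Suc_eq_plus1 of_nat_add of_nat_1 .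
  ultimately have "(real j + 1) * fi_a d (Suc j)
      = (real j + 1) * ((real j - d) * Gamma (real j - d) / ((real j + 1) * (Gamma (real j + 1) * Gamma (- d))))"
    by (simp only: mult.assoc)
  also have "\<dots> = (real j - d) * fi_a d j"
    unfolding fi_a_eq_Gamma[OF assms, of j] times_divide_eq_right
    by (rule mult_divide_mult_cancel_left) simp
  finally show ?thesis .
qed

lemma fi_a_neg:
  fixes d :: real assumes "0 < d" "d < 1" "1 \<le> j"
  shows "fi_a d j < 0"
  using assms(3)
proof (induction j rule: dec_induct)
  case base
  show ?case
    using fi_a_Suc[OF real_not_Ints_between_0_1[OF assms(1,2)], of 0] assms(1) by (simp add: fi_a_0)
next
  case (step j)
  have "(real j + 1) * fi_a d (Suc j) = (real j - d) * fi_a d j"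
    by (rule fi_a_Suc[OF real_not_Ints_between_0_1[OF assms(1,2)]])
  also have "\<dots> < 0"
    using step assms(2) by (intro mult_pos_neg) auto
  finally show ?case
    by (simp add: mult_less_0_iff)
qed

lemma fi_acvf_hosking_step:
  fixes d :: real assumes "0 < d" "d < 1/2"
  shows "(real i + 1 - d) * (real i - real k) * fi_acvf d s2 (nat \<bar>int (Suc i) - int j\<bar>)
       - real i * (real i - real k + d) * fi_acvf d s2 (nat \<bar>int i - int j\<bar>)
     = (real k - real j) * (real j - d) * fi_acvf d s2 (nat \<bar>int i - int j\<bar>)
       - real j * (real k - real j + 1 - d) * fi_acvf d s2 (nat \<bar>int (Suc i) - int j\<bar>)"
proof -
  define W0 W1 where "W0 = fi_acvf d s2 (nat \<bar>int i - int j\<bar>)"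
    and "W1 = fi_acvf d s2 (nat \<bar>int (Suc i) - int j\<bar>)"
  have shift: "int (Suc i) - int j = (int i - int j) + 1" by simp
  have W_rec: "(real i - real j + 1 - d) * W1 = (real i - real j + d) * W0"
    using fi_acvf_Suc_int[OF assms, of "int i - int j" s2] unfolding W0_def W1_def shift by simp
  have "(real i + 1 - d) * (real i - real k) * W1 - real i * (real i - real k + d) * W0
      - ((real k - real j) * (real j - d) * W0 - real j * (real k - real j + 1 - d) * W1)
      = (real i + real j - real k) * ((real i - real j + 1 - d) * W1 - (real i - real j + d) * W0)"
    by (simp add: algebra_simps)
  also have "\<dots> = 0"
    using W_rec by simp
  finally show ?thesis
    unfolding W0_def W1_def by simp
qed

text \<open>Hosking's closed form \<open>C(k,j) \<Gamma>(j - d) \<Gamma>(k - d - j + 1) / (\<Gamma>(-d) \<Gamma>(k - d + 1))\<close>,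
  written as a product.\<close>
definition hosking_coeff :: "real \<Rightarrow> nat \<Rightarrow> nat \<Rightarrow> real" where
  "hosking_coeff d k j = fi_a d j * (\<Prod>m<j. (real k - real m) / (real k - real m - d))"

lemma hosking_coeff_0: "hosking_coeff d k 0 = 1"
  by (simp add: hosking_coeff_def fi_a_0)

lemma hosking_coeff_Suc_self: "hosking_coeff d k (Suc k) = 0"
  by (simp add: hosking_coeff_def)

lemma hosking_coeff_Suc:
  fixes d :: real assumes "d \<notin> \<int>"
  shows "(real j + 1) * (real k - real j - d) * hosking_coeff d k (Suc j)
       = (real k - real j) * (real j - d) * hosking_coeff d k j"
proof -
  define P where "P = (\<Prod>m<j. (real k - real m) / (real k - real m - d))"
  have "real k - real j - d \<noteq> 0"
  proof
    assume "real k - real j - d = 0"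
    then have "d = real k - real j" by simp
    with assms show False by simp
  qed
  then have cancel: "(real k - real j - d) * (P * ((real k - real j) / (real k - real j - d)))
      = (real k - real j) * P"
    by simp
  have "(real j + 1) * (real k - real j - d) * hosking_coeff d k (Suc j)
      = ((real j + 1) * fi_a d (Suc j)) * ((real k - real j - d) * (P * ((real k - real j) / (real k - real j - d))))"
    unfolding hosking_coeff_def P_def by (simp add: ac_simps)
  also have "\<dots> = ((real j - d) * fi_a d j) * ((real k - real j) * P)"
    unfolding fi_a_Suc[OF assms] cancel ..
  also have "\<dots> = (real k - real j) * (real j - d) * hosking_coeff d k j"
    unfolding hosking_coeff_def P_def by (simp add: ac_simps)
  finally show ?thesis .
qed

definition hosking_residual :: "real \<Rightarrow> real \<Rightarrow> nat \<Rightarrow> nat \<Rightarrow> real" where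
  "hosking_residual d s2 k i = (\<Sum>j\<le>k. hosking_coeff d k j * fi_acvf d s2 (nat \<bar>int i - int j\<bar>))"

lemma hosking_residual_Suc:
  fixes d :: real assumes "0 < d" "d < 1/2"
  shows "(real i + 1 - d) * (real i - real k) * hosking_residual d s2 k (Suc i)
       = real i * (real i - real k + d) * hosking_residual d s2 k i"
proof -
  have d_not_Int: "d \<notin> \<int>"
    using assms by (intro real_not_Ints_between_0_1) auto
  define Z where "Z j = real j * (real k - real j + 1 - d) * hosking_coeff d k j
    * fi_acvf d s2 (nat \<bar>int (Suc i) - int j\<bar>)" for j
  have Z_Suc: "Z (Suc j) = (real k - real j) * (real j - d) * hosking_coeff d k j
    * fi_acvf d s2 (nat \<bar>int i - int j\<bar>)" for j
  proof -
    have "Z (Suc j) = (real j + 1) * (real k - real j - d) * hosking_coeff d k (Suc j)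
        * fi_acvf d s2 (nat \<bar>int i - int j\<bar>)"
      unfolding Z_def by (simp add: algebra_simps)
    then show ?thesis
      by (simp only: hosking_coeff_Suc[OF d_not_Int])
  qed
  have summand_telescopes: "(real i + 1 - d) * (real i - real k) * (hosking_coeff d k j * fi_acvf d s2 (nat \<bar>int (Suc i) - int j\<bar>))
     - real i * (real i - real k + d) * (hosking_coeff d k j * fi_acvf d s2 (nat \<bar>int i - int j\<bar>))
     = Z (Suc j) - Z j" for j
    using arg_cong[OF fi_acvf_hosking_step[OF assms, of i k s2 j], of "\<lambda>x. hosking_coeff d k j * x"]
    unfolding Z_Suc unfolding Z_def by (simp add: algebra_simps)
  have "(real i + 1 - d) * (real i - real k) * hosking_residual d s2 k (Suc i)
       - real i * (real i - real k + d) * hosking_residual d s2 k i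
      = (\<Sum>j<Suc k. Z (Suc j) - Z j)"
    unfolding hosking_residual_def lessThan_Suc_atMost sum_distrib_left sum_subtractf[symmetric] summand_telescopes ..
  also have "\<dots> = 0"
    unfolding sum_lessThan_telescope by (simp add: Z_def hosking_coeff_Suc_self)
  finally show ?thesis by simp
qed

lemma hosking_residual_eq_0:
  fixes d :: real assumes "0 < d" "d < 1/2" "1 \<le> i" "i \<le> k"
  shows "hosking_residual d s2 k i = 0"
  using assms(3,4)
proof (induction i rule: dec_induct)
  case base
  then show ?case
    using hosking_residual_Suc[OF assms(1,2), of 0 k s2] assms(2) by simp
next
  case (step i)
  then show ?case
    using hosking_residual_Suc[OF assms(1,2), of i k s2] assms(2) by simp
qed

lemma fi_proj_coeffs_hosking_coeff:
  fixes d :: real assumes "0 < d" "d < 1/2"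
  shows "fi_proj_coeffs d s2 k (hosking_coeff d k)"
  unfolding fi_proj_coeffs_def
proof
  fix i assume i: "i \<in> {1..k}"
  have "{..k} = insert 0 {1..k}" by auto
  then have "hosking_residual d s2 k i
      = fi_acvf d s2 i + (\<Sum>j=1..k. hosking_coeff d k j * fi_acvf d s2 (nat \<bar>int i - int j\<bar>))"
    unfolding hosking_residual_def by (simp add: hosking_coeff_0)
  then show "fi_acvf d s2 i + (\<Sum>j=1..k. hosking_coeff d k j * fi_acvf d s2 (nat \<bar>int i - int j\<bar>)) = 0"
    using hosking_residual_eq_0[OF assms] i by simp
qed

lemma hosking_coeff_less_fi_a:
  fixes d :: real assumes "0 < d" "d < 1" "1 \<le> j" "j \<le> k"
  shows "hosking_coeff d k j < fi_a d j"
proof -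
  have "1 < (\<Prod>m<j. (real k - real m) / (real k - real m - d))"
  proof (rule less_1_prod)
    have "0 \<in> {..<j}" using assms(3) by simp
    then show "{..<j} \<noteq> {}" by blast
    show "1 < (real k - real m) / (real k - real m - d)" if "m \<in> {..<j}" for m
    proof -
      have "real m + 1 \<le> real k" using that assms(4) by simp
      then have "0 < real k - real m - d" using assms(2) by simp
      then show ?thesis using assms(1) by (simp add: less_divide_eq_1_pos)
    qed
  qed simp
  then show ?thesis
    unfolding hosking_coeff_def using fi_a_neg[OF assms(1-3)] by (simp add: mult_less_cancel_left_neg)
qed

text \<open>\<open>fi_b_shift d i n\<close> is the coefficient of \<open>\<epsilon>\<^sub>-\<^sub>n\<close> in \<open>X\<^sub>-\<^sub>i\<close>, which makes the Toeplitz matrix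
  of \<open>fi_acvf\<close> a Gram matrix.\<close>
definition fi_b_shift :: "real \<Rightarrow> nat \<Rightarrow> nat \<Rightarrow> real" where
  "fi_b_shift d i n = (if i \<le> n then fi_b d (n - i) else 0)"

lemma fi_b_shift_mult_sums:
  fixes d :: real assumes "0 < d" "d < 1/2"
  shows "(\<lambda>n. s2 * (fi_b_shift d i n * fi_b_shift d j n)) sums fi_acvf d s2 (nat \<bar>int i - int j\<bar>)"
proof -
  have shifted_sums: "(\<lambda>n. fi_b_shift d i n * fi_b_shift d j n) sums (\<Sum>m. fi_b d m * fi_b d (m + (j - i)))"
    if "i \<le> j" for i j
  proof -
    have "(\<lambda>n. fi_b_shift d i (n + j) * fi_b_shift d j (n + j)) = (\<lambda>n. fi_b d (n + (j - i)) * fi_b d n)"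
      using that by (simp add: fi_b_shift_def)
    then have "(\<lambda>n. fi_b_shift d i (n + j) * fi_b_shift d j (n + j)) sums (\<Sum>m. fi_b d m * fi_b d (m + (j - i)))"
      using summable_sums[OF summable_fi_b_mult[OF assms, of "j - i"]] by (simp add: mult.commute)
    then show ?thesis
      by (subst (asm) sums_zero_iff_shift) (simp_all add: fi_b_shift_def)
  qed
  have "(\<lambda>n. fi_b_shift d i n * fi_b_shift d j n) sums (\<Sum>m. fi_b d m * fi_b d (m + nat \<bar>int i - int j\<bar>))"
  proof (cases "i \<le> j")
    case True
    then show ?thesis using shifted_sums[of i j] by (simp add: nat_diff_distrib)
  next
    case False
    then show ?thesis using shifted_sums[of j i] by (simp add: mult.commute nat_diff_distrib)
  qed
  then show ?thesis
    unfolding fi_acvf_def by (rule sums_mult)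
qed

lemma fi_b_shift_linear_independent:
  fixes d :: real assumes "0 < d"
    and combination_0: "\<And>n. (\<Sum>j=1..k. x j * fi_b_shift d j n) = 0"
  shows "\<forall>j\<in>{1..k}. x j = 0"
proof
  fix n assume "n \<in> {1..k}"
  then show "x n = 0"
  proof (induction n rule: less_induct)
    case (less n)
    have "(\<Sum>j\<in>{1..k} - {n}. x j * fi_b_shift d j n) = 0"
    proof (rule sum.neutral, rule ballI)
      fix j assume "j \<in> {1..k} - {n}"
      then consider "j < n" "j \<in> {1..k}" | "n < j" by fastforce
      then show "x j * fi_b_shift d j n = 0"
        by cases (simp_all add: less.IH fi_b_shift_def)
    qed
    then have "(\<Sum>j=1..k. x j * fi_b_shift d j n) = x n"
      using less.prems by (simp add: sum.remove fi_b_shift_def fi_b_0[OF assms(1)])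
    then show ?case
      using combination_0 by simp
  qed
qed

lemma fi_acvf_toeplitz_nonsingular:
  fixes d :: real assumes "0 < d" "d < 1/2" "0 < s2"
    and solves_0: "\<forall>i\<in>{1..k}. (\<Sum>j=1..k. x j * fi_acvf d s2 (nat \<bar>int i - int j\<bar>)) = 0"
  shows "\<forall>j\<in>{1..k}. x j = 0"
proof (rule fi_b_shift_linear_independent[OF assms(1)])
  define y where "y n = (\<Sum>j=1..k. x j * fi_b_shift d j n)" for n
  have "(\<lambda>n. \<Sum>i=1..k. \<Sum>j=1..k. x i * x j * (s2 * (fi_b_shift d i n * fi_b_shift d j n)))
      sums (\<Sum>i=1..k. \<Sum>j=1..k. x i * x j * fi_acvf d s2 (nat \<bar>int i - int j\<bar>))"
    by (intro sums_sum sums_mult fi_b_shift_mult_sums assms(1,2))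
  moreover have "(\<lambda>n. \<Sum>i=1..k. \<Sum>j=1..k. x i * x j * (s2 * (fi_b_shift d i n * fi_b_shift d j n)))
      = (\<lambda>n. s2 * (y n * y n))"
    unfolding y_def by (auto simp: sum_product sum_distrib_left ac_simps intro!: ext sum.cong)
  moreover have "(\<Sum>i=1..k. \<Sum>j=1..k. x i * x j * fi_acvf d s2 (nat \<bar>int i - int j\<bar>))
      = (\<Sum>i=1..k. x i * (\<Sum>j=1..k. x j * fi_acvf d s2 (nat \<bar>int i - int j\<bar>)))"
    by (simp add: sum_distrib_left mult.assoc)
  ultimately have "(\<lambda>n. s2 * (y n * y n)) sums 0"
    using solves_0 by simp
  then have "s2 * (y n * y n) = 0" for n
    using suminf_eq_zero_iff[of "\<lambda>n. s2 * (y n * y n)"] assms(3) by (auto simp: sums_iff)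
  then show "y n = 0" for n
    using assms(3) by simp
qed

lemma fi_proj_coeffs_unique:
  fixes d :: real assumes "0 < d" "d < 1/2" "0 < s2"
    and "fi_proj_coeffs d s2 k c" "fi_proj_coeffs d s2 k c'"
  shows "\<forall>j\<in>{1..k}. c j = c' j"
proof -
  have "\<forall>i\<in>{1..k}. (\<Sum>j=1..k. (c j - c' j) * fi_acvf d s2 (nat \<bar>int i - int j\<bar>)) = 0"
  proof
    fix i assume "i \<in> {1..k}"
    then have "fi_acvf d s2 i + (\<Sum>j=1..k. c j * fi_acvf d s2 (nat \<bar>int i - int j\<bar>)) = 0"
      "fi_acvf d s2 i + (\<Sum>j=1..k. c' j * fi_acvf d s2 (nat \<bar>int i - int j\<bar>)) = 0"
      using assms(4,5) unfolding fi_proj_coeffs_def by blast+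
    then show "(\<Sum>j=1..k. (c j - c' j) * fi_acvf d s2 (nat \<bar>int i - int j\<bar>)) = 0"
      unfolding left_diff_distrib sum_subtractf by linarith
  qed
  then show ?thesis
    using fi_acvf_toeplitz_nonsingular[OF assms(1-3), of k "\<lambda>j. c j - c' j"] by simp
qed

theorem mainTheorem6:
  fixes d s2 :: real and k :: nat and c :: "nat \<Rightarrow> real"
  assumes "0 < d" and "d < 1/2" and "0 < s2" and "1 \<le> k"
    and "fi_proj_coeffs d s2 k c"
  shows "\<forall>j\<in>{1..k}. c j < fi_a d j \<and> fi_a d j < 0"
proof
  fix j assume j: "j \<in> {1..k}"
  have "c j = hosking_coeff d k j"
    using fi_proj_coeffs_unique[OF assms(1-3,5) fi_proj_coeffs_hosking_coeff[OF assms(1,2)]] j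
    by blast
  moreover have "hosking_coeff d k j < fi_a d j" "fi_a d j < 0"
    using hosking_coeff_less_fi_a[of d j k] fi_a_neg[of d j] assms(1,2) j by auto
  ultimately show "c j < fi_a d j \<and> fi_a d j < 0"
    by simp
qed

end
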